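(* Let $K$ be a positive integer and let $\gamma_0,\dots,\gamma_K$ be real numbers with $\gamma_0=1$ and $\gamma_K\neq 0$. For $n\ge K$ put $$q_n(x)=\sum_{j=0}^K\gamma_jH_{n-j}(x),$$ and let $P(x)=\sum_{j=0}^K\gamma_jx^{K-j}$. (i) If $P$ has only real zeros, then for every $n\ge K$ all the zeros of $q_n$ are real and simple, and the zeros of $q_{n+1}$ interlace the zeros of $q_n$. (ii) If $P$ has non-real zeros, then there exists a positive integer $n_0$, depending only on the non-real zeros of $P$ and on $K$, such that for every $n\ge n_0$ all the zeros of $q_n$ are real and simple and the zeros of $q_{n+1}$ interlace the zeros of $q_n$.
   Context: $H_n$ denotes the standard (physicists') Hermite polynomial of degree $n$, orthogonal with respect to $e^{-x^2}$ on $\mathbb{R}$, with leading coefficient $2^n$; they satisfy $H_{n+1}(x)=2xH_n(x)-H_n'(x)$. Interlacing: given two finite sets $U,V$ of real numbers, $U$ (strictly) interlaces $V$ if $\min U<\min V$ and between any two consecutive elements of either of the two sets there is an element of the other. "The zeros of $p$ interlace the zeros of $q$" means that the set of zeros of $p$ interlaces the set of zeros of $q$ in this sense. *)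

theory Defs
  imports "HOL-Computational_Algebra.Polynomial" Complex_Main
begin

text \<open>Physicists' Hermite polynomials: H_0 = 1, H_(n+1) = 2x H_n - H_n'.\<close>
fun hermite :: "nat \<Rightarrow> real poly" where
  "hermite 0 = 1"
| "hermite (Suc n) = [:0, 2:] * hermite n - pderiv (hermite n)"

definition consecutive :: "real set \<Rightarrow> real \<Rightarrow> real \<Rightarrow> bool" where
  "consecutive U a b \<longleftrightarrow> a \<in> U \<and> b \<in> U \<and> a < b \<and> \<not> (\<exists>u\<in>U. a < u \<and> u < b)"

definition interlaces :: "real set \<Rightarrow> real set \<Rightarrow> bool" where
  "interlaces U V \<longleftrightarrow> finite U \<and> finite V \<and> U \<noteq> {} \<and> V \<noteq> {} \<and> Min U < Min V
     \<and> (\<forall>a b. consecutive U a b \<longrightarrow> (\<exists>v\<in>V. a < v \<and> v < b))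
     \<and> (\<forall>a b. consecutive V a b \<longrightarrow> (\<exists>u\<in>U. a < u \<and> u < b))"

definition real_zeros :: "real poly \<Rightarrow> real set" where
  "real_zeros p = {x. poly p x = 0}"

definition real_simple_zeros :: "real poly \<Rightarrow> bool" where
  "real_simple_zeros p \<longleftrightarrow> p \<noteq> 0 \<and>
     (\<forall>z::complex. poly (map_poly complex_of_real p) z = 0 \<longrightarrow>
        z \<in> \<real> \<and> order z (map_poly complex_of_real p) = 1)"

definition qpoly :: "nat \<Rightarrow> (nat \<Rightarrow> real) \<Rightarrow> nat \<Rightarrow> real poly" where
  "qpoly K \<gamma> n = (\<Sum>j\<le>K. smult (\<gamma> j) (hermite (n - j)))"

definition Ppoly :: "nat \<Rightarrow> (nat \<Rightarrow> real) \<Rightarrow> real poly" where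
  "Ppoly K \<gamma> = (\<Sum>j\<le>K. monom (\<gamma> j) (K - j))"

definition nonreal_zeros :: "real poly \<Rightarrow> complex set" where
  "nonreal_zeros p = {z. poly (map_poly complex_of_real p) z = 0 \<and> z \<notin> \<real>}"

end

theory Submission
  imports Defs "HOL-Computational_Algebra.Fundamental_Theorem_Algebra"
begin

(* Write R_a f = (2x - a) f - f' (raising a f below). Then H_(n+1) = R_0 H_n, the operators R_a
   commute, and R_a = R_0 - a, so q_n = P(R_0) H_(n-K), where p(R_0) f is raising_poly p f.
   Factor P = (x - r_1) ... (x - r_m) Q over the reals with Q free of real zeros; then
   q_n = R_(r_1) ... R_(r_m) (Q(R_0) H_(n-K)).
   If f has simple real zeros and positive leading coefficient, then R_a f = -f' at the zeros of f,
   so R_a f alternates in sign there; hence R_a f again has simple real zeros, interlacing those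
   of f. In particular q_(n+1) = R_0 q_n interlaces q_n as soon as Q(R_0) H_(n-K) has simple real
   zeros. If P has only real zeros, Q = 1. Otherwise let k = deg Q: at a zero of H_(m+k-1),
   running the three-term recurrence backwards gives Q(R_0) H_m = (1 + O(1/m)) H_(m+k), and
   H_(m+k) alternates in sign at these points, so Q(R_0) H_m has simple real zeros for large m.
   The threshold depends only on Q, which ranges over a finite set determined by K and the
   non-real zeros of P. *)

section \<open>The raising operator\<close>

definition raising :: "real \<Rightarrow> real poly \<Rightarrow> real poly" where
  "raising a f = [:-a, 2:] * f - pderiv f"

lemma hermite_Suc_raising: "hermite (Suc n) = raising 0 (hermite n)"
  by (simp add: raising_def)

declare hermite.simps(2) [simp del]

lemma poly_raising_at_root: "poly f x = 0 \<Longrightarrow> poly (raising a f) x = - poly (pderiv f) x"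
  by (simp add: raising_def)

lemma
  assumes "f \<noteq> 0"
  shows degree_raising: "degree (raising a f) = Suc (degree f)"
    and lead_coeff_raising: "lead_coeff (raising a f) = 2 * lead_coeff f"
proof -
  have deg: "degree ([:-a, 2:] * f) = Suc (degree f)"
    using assms by (subst degree_mult_eq) auto
  have less: "degree (- pderiv f) < degree ([:-a, 2:] * f)"
    using deg by (simp add: degree_pderiv)
  have eq: "raising a f = - pderiv f + [:-a, 2:] * f"
    by (simp add: raising_def)
  show "degree (raising a f) = Suc (degree f)"
    unfolding eq using less deg by (simp only: degree_add_eq_right)
  show "lead_coeff (raising a f) = 2 * lead_coeff f"
    unfolding eq using less deg
    by (simp only: lead_coeff_add_le lead_coeff_mult) (simp add: coeff_eq_0)
qed

lemma raising_nonzero: "f \<noteq> 0 \<Longrightarrow> raising a f \<noteq> 0"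
  using lead_coeff_raising[of f a] by auto

lemma raising_0 [simp]: "raising a 0 = 0"
  by (simp add: raising_def)

lemma raising_add: "raising a (f + g) = raising a f + raising a g"
  by (simp add: raising_def pderiv_add algebra_simps del: mult_pCons_left mult_pCons_right)

lemma raising_smult: "raising a (smult c f) = smult c (raising a f)"
  by (simp add: raising_def pderiv_smult smult_diff_right)

lemma raising_sum: "raising a (\<Sum>i\<in>I. g i) = (\<Sum>i\<in>I. raising a (g i))"
  by (induction I rule: infinite_finite_induct) (simp_all add: raising_add)

lemma raising_shift: "raising a f = raising 0 f - smult a f"
  by (simp add: raising_def algebra_simps)

lemma raising_commute: "raising a (raising b f) = raising b (raising a f)"
  by (simp add: raising_def pderiv_diff pderiv_mult pderiv_pCons algebra_simps
      del: mult_pCons_left mult_pCons_right)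

lemma raising_funpow_commute: "raising a ((raising b ^^ i) f) = (raising b ^^ i) (raising a f)"
  by (induction i) (simp_all add: raising_commute[of a b])

lemma pderiv_raising: "pderiv (raising a f) = smult 2 f + raising a (pderiv f)"
  by (simp add: raising_def pderiv_diff pderiv_add pderiv_smult pderiv_mult pderiv_pCons
      algebra_simps del: mult_pCons_left)

section \<open>Hermite polynomials\<close>

lemma degree_coeff_hermite: "degree (hermite n) = n \<and> coeff (hermite n) n = 2 ^ n"
proof (induction n)
  case (Suc n)
  then have h0: "hermite n \<noteq> 0"
    by auto
  show ?case
    using Suc degree_raising[OF h0, of 0] lead_coeff_raising[OF h0, of 0]
    by (simp add: hermite_Suc_raising)
qed simp

lemmas degree_hermite [simp] = degree_coeff_hermite[THEN conjunct1]
  and coeff_hermite_degree [simp] = degree_coeff_hermite[THEN conjunct2]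

lemma hermite_nonzero [simp]: "hermite n \<noteq> 0"
  using coeff_hermite_degree[of n] by (metis leading_coeff_0_iff degree_hermite power_not_zero
      zero_neq_numeral)

lemma pderiv_hermite: "pderiv (hermite (Suc n)) = smult (2 * real (Suc n)) (hermite n)"
proof (induction n)
  case 0
  show ?case
    by (simp add: hermite_Suc_raising raising_def pderiv_pCons)
next
  case (Suc n)
  have "pderiv (hermite (Suc (Suc n)))
      = smult 2 (hermite (Suc n)) + raising 0 (pderiv (hermite (Suc n)))"
    by (simp only: hermite_Suc_raising[of "Suc n"] pderiv_raising)
  also have "\<dots> = smult 2 (hermite (Suc n)) + smult (2 * real (Suc n)) (hermite (Suc n))"
    by (simp only: Suc.IH raising_smult hermite_Suc_raising[of n, symmetric])
  finally show ?case
    by (simp add: smult_add_left[symmetric] algebra_simps)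
qed

lemma poly_hermite_recurrence:
  "poly (hermite (Suc (Suc n))) x
    = 2 * x * poly (hermite (Suc n)) x - 2 * real (Suc n) * poly (hermite n) x"
  by (simp add: hermite_Suc_raising[of "Suc n"] raising_def pderiv_hermite)

lemma poly_hermite_minus: "poly (hermite n) (-x) = (-1) ^ n * poly (hermite n) x"
  by (induction n rule: induct_nat_012)
    (simp_all add: poly_hermite_recurrence hermite_Suc_raising[of 0] raising_def algebra_simps)

lemma hermite_pos_growth:
  assumes "0 < x" "2 * real n \<le> x\<^sup>2"
  shows "0 < poly (hermite n) x \<and> x * poly (hermite n) x \<le> poly (hermite (Suc n)) x"
  using assms(2)
proof (induction n)
  case 0
  show ?case
    using assms(1) by (simp add: hermite_Suc_raising raising_def)
next
  case (Suc n)
  define h0 h1 where "h0 = poly (hermite n) x" and "h1 = poly (hermite (Suc n)) x"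
  have h0: "0 < h0" "x * h0 \<le> h1"
    using Suc by (simp_all add: h0_def h1_def)
  moreover have "0 < x * h0"
    using assms(1) h0(1) by simp
  ultimately have h1: "0 < h1"
    by linarith
  have "2 * real (Suc n) * h0 \<le> x * x * h0"
    using Suc.prems h0(1) by (simp add: power2_eq_square)
  also have "\<dots> \<le> x * h1"
    using h0(2) assms(1) by (simp add: mult.assoc)
  finally have "x * h1 \<le> 2 * x * h1 - 2 * real (Suc n) * h0"
    by (simp add: algebra_simps)
  then show ?case
    using h1 by (simp add: h0_def h1_def poly_hermite_recurrence)
qed

lemma hermite_zero_bound:
  assumes "poly (hermite n) x = 0"
  shows "x\<^sup>2 < 2 * real n"
proof (rule ccontr)
  assume "\<not> x\<^sup>2 < 2 * real n"
  then have "2 * real n \<le> \<bar>x\<bar>\<^sup>2"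
    by simp
  moreover have "x \<noteq> 0"
    using assms calculation by (cases n) auto
  ultimately have "0 < poly (hermite n) \<bar>x\<bar>"
    using hermite_pos_growth by simp
  moreover have "poly (hermite n) \<bar>x\<bar> = 0"
    using assms poly_hermite_minus[of n x] by (cases "0 \<le> x") simp_all
  ultimately show False
    by simp
qed

lemma hermite_zero_abs_le:
  assumes "poly (hermite (n - 1)) x = 0"
  shows "\<bar>x\<bar> \<le> real n"
proof -
  have "0 \<le> (real n - 1)\<^sup>2"
    by simp
  then have "2 * real (n - 1) \<le> (real n)\<^sup>2"
    by (cases n) (simp_all add: power2_eq_square algebra_simps)
  then have "x\<^sup>2 \<le> (real n)\<^sup>2"
    using hermite_zero_bound[OF assms] by simp
  then show ?thesis
    using abs_le_square_iff[of x "real n"] by simp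
qed

section \<open>Polynomials with simple real zeros\<close>

definition simple_real_rooted :: "real poly \<Rightarrow> bool" where
  "simple_real_rooted p \<longleftrightarrow> p \<noteq> 0 \<and> card (real_zeros p) = degree p"

abbreviation sorted_zeros :: "real poly \<Rightarrow> real list" where
  "sorted_zeros p \<equiv> sorted_list_of_set (real_zeros p)"

lemma finite_real_zeros: "p \<noteq> 0 \<Longrightarrow> finite (real_zeros p)"
  unfolding real_zeros_def by (rule poly_roots_finite)

lemma
  assumes "simple_real_rooted p"
  shows length_sorted_zeros: "length (sorted_zeros p) = degree p"
    and set_sorted_zeros: "set (sorted_zeros p) = real_zeros p"
  using assms by (simp_all add: simple_real_rooted_def finite_real_zeros)

lemma simple_real_rooted_1: "simple_real_rooted 1"
  by (simp add: simple_real_rooted_def real_zeros_def)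

lemma prod_linear_factors_dvd:
  fixes p :: "'a :: idom poly"
  assumes "finite Z" "\<And>z. z \<in> Z \<Longrightarrow> poly p z = 0"
  shows "(\<Prod>z\<in>Z. [:-z, 1:]) dvd p"
  using assms
proof (induction Z arbitrary: p rule: finite_induct)
  case (insert w Z)
  obtain h where h: "p = [:-w, 1:] * h"
    using insert.prems poly_eq_0_iff_dvd by blast
  have "poly h z = 0" if "z \<in> Z" for z
    using insert.prems[of z] insert.hyps(2) that h by auto
  then have "(\<Prod>z\<in>Z. [:-z, 1:]) dvd h"
    by (rule insert.IH)
  then have "[:-w, 1:] * (\<Prod>z\<in>Z. [:-z, 1:]) dvd p"
    unfolding h by (rule mult_dvd_mono[OF dvd_refl])
  then show ?case
    by (simp only: prod.insert[OF insert.hyps])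
qed simp

lemma simple_real_rooted_eq_prod:
  assumes "simple_real_rooted p"
  shows "p = smult (lead_coeff p) (\<Prod>z\<in>real_zeros p. [:-z, 1:])"
proof -
  define L where "L = (\<Prod>z\<in>real_zeros p. [:-z, 1:])"
  have p0: "p \<noteq> 0" and fin: "finite (real_zeros p)"
    using assms by (simp_all add: simple_real_rooted_def finite_real_zeros)
  have L0: "L \<noteq> 0" and lcL: "lead_coeff L = 1"
    unfolding L_def using fin by (simp_all add: lead_coeff_prod)
  have "degree L = degree p"
    using assms fin by (simp add: L_def degree_prod_eq_sum_degree simple_real_rooted_def)
  obtain h where h: "p = L * h"
    using prod_linear_factors_dvd[OF fin, of p] unfolding L_def real_zeros_def by blast
  with p0 L0 \<open>degree L = degree p\<close> have "degree h = 0"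
    by (simp add: degree_mult_eq)
  then obtain c where "h = [:c:]"
    by (rule degree_eq_zeroE)
  with h have "p = smult c L"
    by simp
  moreover from this lcL have "lead_coeff p = c"
    by simp
  ultimately show ?thesis
    by (simp add: L_def)
qed

lemma poly_map_poly_of_real:
  "poly (map_poly of_real p) (of_real x :: 'a :: {real_algebra_1, comm_semiring_0})
    = of_real (poly p x)"
  by (induction p) (simp_all add: map_poly_pCons)

lemma real_simple_zeros_if_simple_real_rooted:
  assumes rooted: "simple_real_rooted p"
  shows "real_simple_zeros p"
proof -
  define pc Z where "pc = map_poly complex_of_real p" and "Z = complex_of_real ` real_zeros p"
  have p0: "p \<noteq> 0" and fin: "finite (real_zeros p)"
    using rooted by (simp_all add: simple_real_rooted_def finite_real_zeros)
  have pc0: "pc \<noteq> 0"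
    using p0 by (simp add: pc_def map_poly_eq_0_iff)
  have "mset_set Z \<subseteq># proots pc"
  proof (rule mset_subset_eqI)
    fix z
    show "count (mset_set Z) z \<le> count (proots pc) z"
      using fin pc0 by (auto simp: Z_def pc_def count_mset_set' real_zeros_def order_gt_0_iff
          Suc_le_eq poly_map_poly_of_real)
  qed
  moreover have "size (mset_set Z) = size (proots pc)"
    using rooted fin by (simp add: Z_def pc_def card_image inj_on_def size_proots_complex
        degree_map_poly simple_real_rooted_def)
  ultimately have roots: "proots pc = mset_set Z"
    by (metis mset_subset_size subset_mset.le_imp_less_or_eq less_irrefl)
  show ?thesis
    unfolding real_simple_zeros_def
  proof (intro conjI allI impI)
    fix z assume "poly (map_poly complex_of_real p) z = 0"
    then have "0 < order z pc"
      using pc0 by (simp add: pc_def order_gt_0_iff)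
    moreover have "order z pc = count (mset_set Z) z"
      using pc0 roots by (metis count_proots)
    ultimately have "z \<in> Z" "order z pc = 1"
      using fin by (auto simp: Z_def count_mset_set' split: if_splits)
    then show "z \<in> \<real>" "order z (map_poly complex_of_real p) = 1"
      by (auto simp: Z_def pc_def)
  qed (rule p0)
qed

lemma strict_sorted_nth_less_iff:
  fixes xs :: "'a :: linorder list"
  assumes "sorted_wrt (<) xs" "i < length xs" "j < length xs"
  shows "xs ! i < xs ! j \<longleftrightarrow> i < j"
proof
  show "i < j" if "xs ! i < xs ! j"
    using that sorted_nth_mono[OF strict_sorted_imp_sorted[OF assms(1)], of j i] assms
    by (metis leD not_less)
qed (use sorted_wrt_nth_less[OF assms(1)] assms in auto)

lemma card_greater_nth:
  fixes xs :: "'a :: linorder list"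
  assumes sorted: "sorted_wrt (<) xs" and j: "j < length xs"
  shows "card {x \<in> set xs. xs ! j < x} = length xs - Suc j"
proof -
  have "{x \<in> set xs. xs ! j < x} = (!) xs ` {Suc j..<length xs}"
  proof (intro equalityI subsetI)
    fix x assume "x \<in> {x \<in> set xs. xs ! j < x}"
    then obtain i where "i < length xs" "x = xs ! i" "xs ! j < xs ! i"
      by (auto simp: in_set_conv_nth)
    then show "x \<in> (!) xs ` {Suc j..<length xs}"
      using strict_sorted_nth_less_iff[OF sorted j] by auto
  qed (use strict_sorted_nth_less_iff[OF sorted j] in auto)
  moreover have "inj_on ((!) xs) {Suc j..<length xs}"
    using sorted by (intro inj_on_nth) (auto simp: strict_sorted_iff)
  ultimately show ?thesis
    by (simp add: card_image)
qed

lemma sgn_prod: "sgn (\<Prod>x\<in>A. f x) = (\<Prod>x\<in>A. sgn (f x :: 'b :: linordered_idom))"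
  by (induction A rule: infinite_finite_induct) (simp_all add: sgn_mult)

lemma sgn_pderiv_at_sorted_zero:
  assumes rooted: "simple_real_rooted f" and lc: "0 < lead_coeff f" and j: "j < degree f"
  shows "sgn (poly (pderiv f) (sorted_zeros f ! j)) = (-1) ^ (degree f - Suc j)"
proof -
  define Z r where "Z = real_zeros f" and "r = sorted_zeros f ! j"
  have fin: "finite Z"
    using rooted by (simp add: Z_def simple_real_rooted_def finite_real_zeros)
  have r: "r \<in> Z"
    using rooted j by (metis Z_def r_def nth_mem length_sorted_zeros set_sorted_zeros)
  define h where "h = smult (lead_coeff f) (\<Prod>z\<in>Z - {r}. [:-z, 1:])"
  have "f = smult (lead_coeff f) (\<Prod>z\<in>Z. [:-z, 1:])"
    unfolding Z_def by (rule simple_real_rooted_eq_prod[OF rooted])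
  also have "\<dots> = [:-r, 1:] * h"
    unfolding h_def by (simp only: prod.remove[OF fin r] mult_smult_right)
  finally have "poly (pderiv f) r = poly h r"
    by (simp add: pderiv_mult pderiv_pCons del: mult_pCons_left)
  also have "\<dots> = lead_coeff f * (\<Prod>z\<in>Z - {r}. r - z)"
    by (simp add: h_def poly_prod)
  finally have "sgn (poly (pderiv f) r) = (\<Prod>z\<in>Z - {r}. sgn (r - z))"
    using lc by (simp add: sgn_mult sgn_prod)
  also have "\<dots> = (\<Prod>z\<in>Z - {r}. if r < z then -1 else 1)"
    by (intro prod.cong refl) (auto simp: sgn_if)
  also have "\<dots> = (\<Prod>z\<in>Z. if r < z then -1 else 1)"
    by (simp add: prod.remove[OF fin r])
  also have "\<dots> = (-1) ^ card {z \<in> Z. r < z}"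
    using fin by (simp add: prod.inter_filter[symmetric])
  also have "card {z \<in> Z. r < z} = degree f - Suc j"
    using card_greater_nth[OF strict_sorted_list_of_set j[folded length_sorted_zeros[OF rooted]]]
      rooted by (simp add: Z_def r_def set_sorted_zeros simple_real_rooted_def)
  finally show ?thesis
    by (simp add: r_def)
qed

lemma sgn_raising_at_sorted_zero:
  assumes "simple_real_rooted f" "0 < lead_coeff f" "j < degree f"
  shows "sgn (poly (raising a f) (sorted_zeros f ! j)) = (-1) ^ (degree f - j)"
proof -
  have "sorted_zeros f ! j \<in> real_zeros f"
    using assms by (metis length_sorted_zeros set_sorted_zeros nth_mem)
  then have "poly f (sorted_zeros f ! j) = 0"
    by (simp add: real_zeros_def)
  moreover have "degree f - j = Suc (degree f - Suc j)"
    using assms(3) by simp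
  ultimately show ?thesis
    using sgn_pderiv_at_sorted_zero[OF assms] by (simp add: poly_raising_at_root)
qed

lemma sgn_poly_at_top:
  fixes p :: "real poly"
  assumes "0 < lead_coeff p"
  obtains M where "\<And>x. M \<le> x \<Longrightarrow> sgn (poly p x) = 1"
  using poly_pinfty_gt_lc[OF assms] assms by (metis less_le_trans sgn_pos)

lemma sgn_poly_at_bot:
  fixes p :: "real poly"
  assumes "0 < lead_coeff p"
  obtains M where "\<And>x. x \<le> M \<Longrightarrow> sgn (poly p x) = (-1) ^ degree p"
proof -
  define q where "q = smult ((-1) ^ degree p) (pcompose p [:0, -1:])"
  have "lead_coeff q = lead_coeff p"
    by (simp add: q_def lead_coeff_comp flip: power_mult_distrib)
  then obtain M where M: "\<And>x. M \<le> x \<Longrightarrow> sgn (poly q x) = 1"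
    using sgn_poly_at_top assms by metis
  have "sgn (poly p x) = (-1) ^ degree p" if "x \<le> -M" for x
  proof -
    have "(-1) ^ degree p * sgn (poly p x) = 1"
      using M[of "-x"] that by (simp add: q_def poly_pcompose sgn_mult)
    then show ?thesis
      by (cases "even (degree p)") auto
  qed
  then show ?thesis
    using that by blast
qed

lemma outer_points_sgn_poly:
  fixes p :: "real poly" and A :: "real set"
  assumes lc: "0 < lead_coeff p" and fin: "finite A"
  obtains a b where "a < b" "\<And>z. z \<in> A \<Longrightarrow> a < z \<and> z < b"
    "sgn (poly p a) = (-1) ^ degree p" "sgn (poly p b) = 1"
proof -
  obtain M0 where M0: "\<And>x. x \<le> M0 \<Longrightarrow> sgn (poly p x) = (-1) ^ degree p"
    using sgn_poly_at_bot[OF lc] by blast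
  obtain M1 where M1: "\<And>x. M1 \<le> x \<Longrightarrow> sgn (poly p x) = 1"
    using sgn_poly_at_top[OF lc] by blast
  define B where "B = \<bar>M0\<bar> + \<bar>M1\<bar> + (\<Sum>z\<in>A. \<bar>z\<bar>) + 1"
  have abs_B: "\<bar>z\<bar> < B" if "z \<in> A" for z
    using member_le_sum[of z A abs] that fin by (simp add: B_def)
  have B: "-B < z \<and> z < B" if "z \<in> A" for z
    using abs_B[OF that] by (auto simp: abs_less_iff)
  have "0 \<le> (\<Sum>z\<in>A. \<bar>z\<bar>)"
    by (rule sum_nonneg) simp
  then have "0 < B" "-B \<le> M0" "M1 \<le> B"
    using abs_ge_minus_self[of M0] abs_ge_self[of M1] unfolding B_def by linarith+
  then show ?thesis
    by (intro that[of "-B" B] B M0 M1) auto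
qed

lemma
  fixes p :: "real poly" and ys :: "real list"
  assumes p0: "p \<noteq> 0" and sorted: "sorted_wrt (<) ys" and len: "length ys = Suc (degree p)"
    and change: "\<And>i. i < degree p \<Longrightarrow> poly p (ys ! i) * poly p (ys ! Suc i) < 0"
  shows simple_real_rooted_if_sign_changes: "simple_real_rooted p"
    and sorted_zeros_between_sign_changes:
      "\<And>i. i < degree p \<Longrightarrow> ys ! i < sorted_zeros p ! i \<and> sorted_zeros p ! i < ys ! Suc i"
proof -
  define d where "d = degree p"
  have "\<exists>x. ys ! i < x \<and> x < ys ! Suc i \<and> poly p x = 0" if "i < d" for i
    using poly_IVT[OF _ change] sorted_wrt_nth_less[OF sorted, of i "Suc i"] that len
    by (simp add: d_def)
  then obtain z where z: "\<And>i. i < d \<Longrightarrow> ys ! i < z i \<and> z i < ys ! Suc i \<and> poly p (z i) = 0"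
    by metis
  define zs where "zs = map z [0..<d]"
  have zs_sorted: "sorted_wrt (<) zs"
  proof (unfold sorted_wrt_iff_nth_less, intro allI impI)
    fix i j assume ij: "i < j" "j < length zs"
    have "z i < ys ! Suc i"
      using z ij by (simp add: zs_def)
    also have "ys ! Suc i \<le> ys ! j"
      using ij len by (intro sorted_nth_mono[OF strict_sorted_imp_sorted[OF sorted]])
        (auto simp: zs_def d_def)
    also have "ys ! j < z j"
      using z ij by (simp add: zs_def)
    finally show "zs ! i < zs ! j"
      using ij by (simp add: zs_def)
  qed
  have "set zs \<subseteq> real_zeros p"
    using z by (auto simp: zs_def real_zeros_def)
  moreover have "card (set zs) = d"
    using zs_sorted distinct_card[of zs] by (simp add: strict_sorted_iff zs_def)
  moreover have "card (real_zeros p) \<le> d"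
    unfolding d_def real_zeros_def using p0 by (rule card_poly_roots_bound)
  ultimately have zeros: "set zs = real_zeros p"
    using card_seteq[OF finite_real_zeros[OF p0]] by blast
  show rooted: "simple_real_rooted p"
    using p0 zeros \<open>card (set zs) = d\<close> by (simp add: simple_real_rooted_def d_def)
  have "length zs = card (real_zeros p)"
    using rooted by (simp add: simple_real_rooted_def zs_def d_def)
  then have "sorted_zeros p = zs"
    using sorted_list_of_set_unique[OF finite_real_zeros[OF p0]] zeros zs_sorted by blast
  then show "ys ! i < sorted_zeros p ! i \<and> sorted_zeros p ! i < ys ! Suc i" if "i < degree p" for i
    using z that by (simp add: zs_def d_def)
qed

lemma
  fixes p :: "real poly" and zs :: "real list"
  assumes lc: "0 < lead_coeff p" and deg: "degree p = Suc (length zs)"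
    and sorted: "sorted_wrt (<) zs"
    and alternating: "\<And>i. i < length zs \<Longrightarrow> sgn (poly p (zs ! i)) = (-1) ^ (length zs - i)"
  shows simple_real_rooted_if_alternating: "simple_real_rooted p"
    and sorted_zeros_interlace_if_alternating:
      "\<And>i. i < length zs \<Longrightarrow> sorted_zeros p ! i < zs ! i \<and> zs ! i < sorted_zeros p ! Suc i"
proof -
  obtain a b where "a < b" and ab: "\<And>z. z \<in> set zs \<Longrightarrow> a < z \<and> z < b"
    and sgn_a: "sgn (poly p a) = (-1) ^ degree p" and sgn_b: "sgn (poly p b) = 1"
    using outer_points_sgn_poly[OF lc finite_set] by blast
  define ys where "ys = a # zs @ [b]"
  have ys_sorted: "sorted_wrt (<) ys"
    using sorted ab \<open>a < b\<close> by (auto simp: ys_def sorted_wrt_append)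
  have ys_len: "length ys = Suc (degree p)"
    using deg by (simp add: ys_def)
  have ys_sgn: "sgn (poly p (ys ! i)) = (-1) ^ (degree p - i)" if "i \<le> degree p" for i
  proof (cases i)
    case (Suc j)
    show ?thesis
    proof (cases "j < length zs")
      case True
      then show ?thesis
        using alternating[of j] Suc deg by (simp add: ys_def nth_append)
    next
      case False
      then have "j = length zs"
        using that Suc deg by simp
      then show ?thesis
        using sgn_b Suc deg by (simp add: ys_def)
    qed
  qed (simp add: ys_def sgn_a)
  have change: "poly p (ys ! i) * poly p (ys ! Suc i) < 0" if "i < degree p" for i
  proof -
    have "degree p - i = Suc (degree p - Suc i)"
      using that by simp
    then have "sgn (poly p (ys ! i) * poly p (ys ! Suc i)) = -1"
      using ys_sgn[of i] ys_sgn[of "Suc i"] that by (simp add: sgn_mult)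
    then show ?thesis
      by (simp add: sgn_1_neg)
  qed
  have p0: "p \<noteq> 0"
    using lc by auto
  note sign_changes = p0 ys_sorted ys_len change
  show "simple_real_rooted p"
    using simple_real_rooted_if_sign_changes[OF sign_changes] .
  show "sorted_zeros p ! i < zs ! i \<and> zs ! i < sorted_zeros p ! Suc i" if "i < length zs" for i
    using sorted_zeros_between_sign_changes[OF sign_changes, of i]
      sorted_zeros_between_sign_changes[OF sign_changes, of "Suc i"] that deg
    by (simp add: ys_def nth_append)
qed

lemma
  assumes "simple_real_rooted f" "0 < lead_coeff f"
  shows simple_real_rooted_raising: "simple_real_rooted (raising a f)"
    and sorted_zeros_raising_interlace:
      "\<And>i. i < degree f \<Longrightarrow> sorted_zeros (raising a f) ! i < sorted_zeros f ! i
         \<and> sorted_zeros f ! i < sorted_zeros (raising a f) ! Suc i"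
proof -
  have f0: "f \<noteq> 0"
    using assms by (simp add: simple_real_rooted_def)
  have lc: "0 < lead_coeff (raising a f)"
    using assms lead_coeff_raising[OF f0, of a] by simp
  have deg: "degree (raising a f) = Suc (length (sorted_zeros f))"
    using degree_raising[OF f0] length_sorted_zeros[OF assms(1)] by simp
  have "sgn (poly (raising a f) (sorted_zeros f ! i)) = (-1) ^ (length (sorted_zeros f) - i)"
    if "i < length (sorted_zeros f)" for i
    using sgn_raising_at_sorted_zero[OF assms] that assms by (simp add: simple_real_rooted_def)
  note alternating = lc deg strict_sorted_list_of_set this
  show "simple_real_rooted (raising a f)"
    using simple_real_rooted_if_alternating[OF alternating] .
  show "sorted_zeros (raising a f) ! i < sorted_zeros f ! i
      \<and> sorted_zeros f ! i < sorted_zeros (raising a f) ! Suc i" if "i < degree f" for i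
    using sorted_zeros_interlace_if_alternating[OF alternating] that assms
    by (simp add: simple_real_rooted_def)
qed

lemma interlaces_if_nth_interlace:
  fixes us vs :: "real list"
  assumes su: "sorted_wrt (<) us" and sv: "sorted_wrt (<) vs"
    and len: "length us = Suc (length vs)" and ne: "vs \<noteq> []"
    and between: "\<And>i. i < length vs \<Longrightarrow> us ! i < vs ! i \<and> vs ! i < us ! Suc i"
  shows "interlaces (set us) (set vs)"
proof -
  have Min_nth0: "Min (set xs) = xs ! 0" if "sorted_wrt (<) xs" "xs \<noteq> []" for xs :: "real list"
    using that strict_sorted_nth_less_iff[OF that(1), of 0]
    by (intro Min_eqI) (auto simp: in_set_conv_nth le_less)
  have "Min (set us) < Min (set vs)"
    using Min_nth0[OF su] Min_nth0[OF sv ne] between[of 0] ne len by (cases us) auto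
  moreover have "\<exists>v\<in>set vs. a < v \<and> v < b" if cons: "consecutive (set us) a b" for a b
  proof -
    obtain i j where ij: "i < length us" "j < length us" "a = us ! i" "b = us ! j"
      using cons by (auto simp: consecutive_def in_set_conv_nth)
    then have "i < j"
      using cons strict_sorted_nth_less_iff[OF su] by (simp add: consecutive_def)
    moreover have "\<not> Suc i < j"
      using cons ij strict_sorted_nth_less_iff[OF su, of i "Suc i"]
        strict_sorted_nth_less_iff[OF su, of "Suc i" j]
      by (auto simp: consecutive_def)
    ultimately have "j = Suc i"
      by simp
    then show ?thesis
      using between[of i] ij len by (auto intro!: bexI[of _ "vs ! i"])
  qed
  moreover have "\<exists>u\<in>set us. a < u \<and> u < b" if cons: "consecutive (set vs) a b" for a b
  proof -
    obtain i j where ij: "i < length vs" "j < length vs" "a = vs ! i" "b = vs ! j"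
      using cons by (auto simp: consecutive_def in_set_conv_nth)
    then have "Suc i \<le> j"
      using cons strict_sorted_nth_less_iff[OF sv] by (simp add: consecutive_def)
    then have "us ! Suc i \<le> us ! j"
      using ij len by (intro sorted_nth_mono[OF strict_sorted_imp_sorted[OF su]]) auto
    then show ?thesis
      using between[of i] between[of j] ij len by (auto intro!: bexI[of _ "us ! Suc i"])
  qed
  ultimately show ?thesis
    using ne len by (auto simp: interlaces_def)
qed

lemma interlaces_real_zeros_raising:
  assumes "simple_real_rooted f" "0 < lead_coeff f" "0 < degree f"
  shows "interlaces (real_zeros (raising a f)) (real_zeros f)"
proof -
  have rooted: "simple_real_rooted (raising a f)"
    using simple_real_rooted_raising[OF assms(1,2)] .
  have "interlaces (set (sorted_zeros (raising a f))) (set (sorted_zeros f))"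
  proof (rule interlaces_if_nth_interlace[OF strict_sorted_list_of_set strict_sorted_list_of_set])
    show "length (sorted_zeros (raising a f)) = Suc (length (sorted_zeros f))"
      using assms rooted
      by (simp add: length_sorted_zeros simple_real_rooted_def degree_raising
          del: length_sorted_list_of_set)
    show "sorted_zeros f \<noteq> []"
      using assms by (metis length_sorted_zeros list.size(3) less_irrefl)
  qed (use sorted_zeros_raising_interlace[OF assms(1,2)] assms(1) in
      \<open>simp add: length_sorted_zeros del: length_sorted_list_of_set\<close>)
  then show ?thesis
    using assms(1) rooted by (simp add: set_sorted_zeros)
qed

section \<open>Polynomials in the raising operator\<close>

definition raising_poly :: "real poly \<Rightarrow> real poly \<Rightarrow> real poly" where
  "raising_poly p f = (\<Sum>i\<le>degree p. smult (coeff p i) ((raising 0 ^^ i) f))"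

lemma raising_poly_eq_sum:
  assumes "degree p \<le> N"
  shows "raising_poly p f = (\<Sum>i\<le>N. smult (coeff p i) ((raising 0 ^^ i) f))"
  unfolding raising_poly_def
  by (rule sum.mono_neutral_left) (use assms in \<open>auto simp: coeff_eq_0\<close>)

lemma raising_poly_0 [simp]: "raising_poly 0 f = 0"
  by (simp add: raising_poly_def)

lemma raising_poly_pCons: "raising_poly (pCons a p) f = smult a f + raising_poly p (raising 0 f)"
proof -
  have "raising_poly (pCons a p) f
      = (\<Sum>i\<le>Suc (degree p). smult (coeff (pCons a p) i) ((raising 0 ^^ i) f))"
    by (rule raising_poly_eq_sum) (simp add: degree_pCons_le)
  also have "\<dots>
      = smult a f + (\<Sum>i\<le>degree p. smult (coeff p i) ((raising 0 ^^ i) (raising 0 f)))"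
    by (subst sum.atMost_Suc_shift) (simp add: funpow_swap1)
  finally show ?thesis
    by (simp add: raising_poly_def)
qed

lemma raising_poly_add: "raising_poly (p + q) f = raising_poly p f + raising_poly q f"
proof -
  define N where "N = max (degree p) (degree q)"
  have "degree (p + q) \<le> N" "degree p \<le> N" "degree q \<le> N"
    by (simp_all add: N_def degree_add_le)
  then show ?thesis
    by (simp add: raising_poly_eq_sum smult_add_left sum.distrib)
qed

lemma smult_sum_right: "smult c (\<Sum>i\<in>I. g i) = (\<Sum>i\<in>I. smult c (g i))"
  by (induction I rule: infinite_finite_induct) (simp_all add: smult_add_right)

lemma raising_poly_smult: "raising_poly (smult c p) f = smult c (raising_poly p f)"
  by (simp add: raising_poly_eq_sum[of "smult c p" "degree p"] raising_poly_def smult_sum_right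
      degree_smult_le)

lemma raising_raising_poly: "raising a (raising_poly p f) = raising_poly p (raising a f)"
  by (simp add: raising_poly_def raising_sum raising_smult raising_funpow_commute)

lemma raising_poly_mult: "raising_poly (p * q) f = raising_poly p (raising_poly q f)"
proof (induction p arbitrary: f)
  case (pCons a p)
  have "raising_poly (pCons a p * q) f
      = smult a (raising_poly q f) + raising_poly (p * q) (raising 0 f)"
    by (simp add: raising_poly_add raising_poly_smult raising_poly_pCons)
  also have "\<dots> = raising_poly (pCons a p) (raising_poly q f)"
    by (simp add: pCons.IH raising_raising_poly raising_poly_pCons)
  finally show ?case .
qed simp

lemma raising_poly_const [simp]: "raising_poly [:c:] f = smult c f"
  by (simp add: raising_poly_pCons)

lemma raising_poly_1 [simp]: "raising_poly 1 f = f"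
  by (simp add: one_pCons)

lemma raising_poly_linear: "raising_poly [:-a, 1:] f = raising a f"
  by (simp add: raising_poly_pCons raising_shift[of a])

lemma degree_lead_coeff_raising_poly:
  assumes "p \<noteq> 0" "f \<noteq> 0"
  shows "degree (raising_poly p f) = degree p + degree f
    \<and> lead_coeff (raising_poly p f) = lead_coeff p * 2 ^ degree p * lead_coeff f"
  using assms
proof (induction p arbitrary: f)
  case (pCons a p)
  show ?case
  proof (cases "p = 0")
    case False
    have Rf: "raising 0 f \<noteq> 0" "degree (raising 0 f) = Suc (degree f)"
      "lead_coeff (raising 0 f) = 2 * lead_coeff f"
      using pCons.prems raising_nonzero degree_raising lead_coeff_raising by metis+
    note IH = pCons.IH[OF False Rf(1), unfolded Rf(3), unfolded Rf(2)]
    have "degree (smult a f) < degree (raising_poly p (raising 0 f))"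
      using IH by simp
    then show ?thesis
      using conjunct1[OF IH] conjunct2[OF IH] False
      by (simp add: raising_poly_pCons lead_coeff_add_le degree_add_eq_right coeff_eq_0)
  qed (use pCons.prems in simp)
qed simp

lemmas degree_raising_poly = degree_lead_coeff_raising_poly[THEN conjunct1]
  and lead_coeff_raising_poly = degree_lead_coeff_raising_poly[THEN conjunct2]

lemma simple_real_rooted_raising_poly_linear_factors:
  assumes "simple_real_rooted h" "0 < lead_coeff h"
  shows "simple_real_rooted (raising_poly (\<Prod>r\<leftarrow>rs. [:-r, 1:]) h)
    \<and> 0 < lead_coeff (raising_poly (\<Prod>r\<leftarrow>rs. [:-r, 1:]) h)"
proof (induction rs)
  case (Cons r rs)
  define g where "g = raising_poly (\<Prod>r\<leftarrow>rs. [:-r, 1:]) h"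
  have "g \<noteq> 0"
    using Cons by (auto simp: g_def)
  have "raising_poly (\<Prod>r\<leftarrow>r # rs. [:-r, 1:]) h = raising r g"
    by (simp add: g_def raising_poly_mult raising_poly_linear del: mult_pCons_left)
  then show ?case
    using Cons simple_real_rooted_raising lead_coeff_raising[OF \<open>g \<noteq> 0\<close>, of r]
    by (simp add: g_def)
qed (use assms in simp)

lemma funpow_raising_hermite: "(raising 0 ^^ i) (hermite m) = hermite (m + i)"
  by (induction i) (simp_all add: hermite_Suc_raising)

lemma raising_poly_hermite:
  "raising_poly p (hermite m) = (\<Sum>i\<le>degree p. smult (coeff p i) (hermite (m + i)))"
  by (simp add: raising_poly_def funpow_raising_hermite)

lemma simple_real_rooted_hermite: "simple_real_rooted (hermite n)"
proof (induction n)
  case (Suc n)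
  then show ?case
    using simple_real_rooted_raising[OF Suc] by (simp add: hermite_Suc_raising)
qed (simp add: simple_real_rooted_1)

section \<open>Simple real zeros of Q(R) H_m for large m\<close>

(* At a zero x of H_(n-1), hermite_ratio n j x = H_(n-j)(x) / H_n(x): the three-term recurrence
   run backwards from H_(n-1)(x) = 0. *)
fun hermite_ratio :: "nat \<Rightarrow> nat \<Rightarrow> real \<Rightarrow> real" where
  "hermite_ratio n 0 x = 1"
| "hermite_ratio n (Suc 0) x = 0"
| "hermite_ratio n (Suc (Suc j)) x =
     (2 * x * hermite_ratio n (Suc j) x - hermite_ratio n j x) / (2 * real (n - Suc j))"

lemma hermite_at_zero_of_pred:
  assumes zero: "poly (hermite (n - 1)) x = 0" and "j \<le> n"
  shows "poly (hermite (n - j)) x = hermite_ratio n j x * poly (hermite n) x"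
  using assms(2)
proof (induction j rule: induct_nat_012)
  case (ge2 j)
  define l where "l = n - Suc (Suc j)"
  have idx: "n - j = Suc (Suc l)" "n - Suc j = Suc l" "n - Suc (Suc j) = l"
    using ge2.prems by (simp_all add: l_def)
  have "poly (hermite l) x
      = (2 * x * poly (hermite (Suc l)) x - poly (hermite (Suc (Suc l))) x) / (2 * real (Suc l))"
    using poly_hermite_recurrence[of l x] by (simp add: field_simps)
  then show ?case
    using ge2.IH ge2.prems by (simp add: idx field_simps)
qed (use zero in simp_all)

lemma hermite_ratio_bound:
  assumes x: "\<bar>x\<bar> \<le> real n" and "1 \<le> j" "2 * j \<le> n"
  shows "\<bar>hermite_ratio n j x\<bar> \<le> 3 ^ j / real n"
  using assms(2,3)
proof (induction j rule: induct_nat_012)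
  case (ge2 j)
  have n: "0 < real n"
    using ge2.prems by simp
  define D where "D = 2 * real (n - Suc j)"
  have D: "real n \<le> D"
    using ge2.prems by (simp add: D_def)
  define num where "num = 2 * x * hermite_ratio n (Suc j) x - hermite_ratio n j x"
  have "\<bar>num\<bar> \<le> 3 ^ Suc (Suc j)"
  proof (cases j)
    case (Suc i)
    have "\<bar>num\<bar> \<le> \<bar>2 * x * hermite_ratio n (Suc j) x\<bar> + \<bar>hermite_ratio n j x\<bar>"
      unfolding num_def by (rule abs_triangle_ineq4)
    also have "\<dots> = 2 * \<bar>x\<bar> * \<bar>hermite_ratio n (Suc j) x\<bar> + \<bar>hermite_ratio n j x\<bar>"
      by (simp add: abs_mult)
    also have "\<dots> \<le> 2 * real n * (3 ^ Suc j / real n) + 3 ^ j / real n"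
      using ge2.IH ge2.prems x Suc by (intro add_mono mult_mono) auto
    also have "\<dots> \<le> 2 * 3 ^ Suc j + 3 ^ j"
      using n ge2.prems by (simp add: divide_le_eq)
    also have "\<dots> \<le> 3 ^ Suc (Suc j)"
      by simp
    finally show ?thesis .
  qed (simp add: num_def)
  have "\<bar>hermite_ratio n (Suc (Suc j)) x\<bar> = \<bar>num\<bar> / D"
    by (simp add: num_def D_def)
  also have "\<dots> \<le> \<bar>num\<bar> / real n"
    using D n by (intro divide_left_mono) auto
  also have "\<dots> \<le> 3 ^ Suc (Suc j) / real n"
    using \<open>\<bar>num\<bar> \<le> 3 ^ Suc (Suc j)\<close> n by (intro divide_right_mono) auto
  finally show ?case .
qed simp_all

lemma hermite_ratio_combination_pos:
  fixes Q :: "real poly"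
  assumes lc: "0 < lead_coeff Q" and x: "\<bar>x\<bar> \<le> real n" and deg: "2 * degree Q \<le> n"
    and small: "(\<Sum>i<degree Q. \<bar>coeff Q i\<bar>) * 3 ^ degree Q < real n * lead_coeff Q"
  shows "0 < (\<Sum>i\<le>degree Q. coeff Q i * hermite_ratio n (degree Q - i) x)"
proof -
  define k where "k = degree Q"
  have "0 \<le> (\<Sum>i<degree Q. \<bar>coeff Q i\<bar>) * 3 ^ degree Q"
    by (simp add: sum_nonneg)
  then have "0 < real n * lead_coeff Q"
    using small by linarith
  then have n: "0 < real n"
    using lc by (simp add: zero_less_mult_iff)
  have "\<bar>\<Sum>i<k. coeff Q i * hermite_ratio n (k - i) x\<bar>
      \<le> (\<Sum>i<k. \<bar>coeff Q i\<bar> * (3 ^ k / real n))"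
  proof (rule order.trans[OF sum_abs sum_mono])
    fix i assume "i \<in> {..<k}"
    then have "\<bar>hermite_ratio n (k - i) x\<bar> \<le> 3 ^ (k - i) / real n"
      using hermite_ratio_bound[OF x, of "k - i"] deg by (simp add: k_def)
    also have "\<dots> \<le> 3 ^ k / real n"
      using n by (intro divide_right_mono power_increasing) auto
    finally show
      "\<bar>coeff Q i * hermite_ratio n (k - i) x\<bar> \<le> \<bar>coeff Q i\<bar> * (3 ^ k / real n)"
      unfolding abs_mult by (rule mult_left_mono) simp
  qed
  also have "\<dots> = (\<Sum>i<k. \<bar>coeff Q i\<bar>) * 3 ^ k / real n"
    by (simp add: sum_distrib_right sum_divide_distrib)
  also have "\<dots> < lead_coeff Q"
    using small n by (simp add: k_def pos_divide_less_eq mult.commute)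
  finally have "\<bar>\<Sum>i<k. coeff Q i * hermite_ratio n (k - i) x\<bar> < lead_coeff Q" .
  moreover have "(\<Sum>i\<le>k. coeff Q i * hermite_ratio n (k - i) x)
      = (\<Sum>i<k. coeff Q i * hermite_ratio n (k - i) x) + lead_coeff Q"
    by (simp add: k_def lessThan_Suc_atMost[symmetric])
  ultimately show ?thesis
    by (simp add: k_def)
qed

lemma poly_raising_poly_hermite_at_zero:
  assumes zero: "poly (hermite (m + degree Q - 1)) x = 0"
  shows "poly (raising_poly Q (hermite m)) x
    = (\<Sum>i\<le>degree Q. coeff Q i * hermite_ratio (m + degree Q) (degree Q - i) x)
      * poly (hermite (m + degree Q)) x"
proof -
  have "poly (raising_poly Q (hermite m)) x
      = (\<Sum>i\<le>degree Q. coeff Q i * poly (hermite (m + i)) x)"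
    by (simp add: raising_poly_hermite poly_sum)
  also have "\<dots> = (\<Sum>i\<le>degree Q. coeff Q i
      * (hermite_ratio (m + degree Q) (degree Q - i) x * poly (hermite (m + degree Q)) x))"
  proof (intro sum.cong refl)
    fix i assume "i \<in> {..degree Q}"
    then show "coeff Q i * poly (hermite (m + i)) x = coeff Q i
        * (hermite_ratio (m + degree Q) (degree Q - i) x * poly (hermite (m + degree Q)) x)"
      using hermite_at_zero_of_pred[OF zero, of "degree Q - i"] by simp
  qed
  finally show ?thesis
    by (simp only: sum_distrib_right mult.assoc)
qed

lemma sgn_raising_poly_hermite_at_sorted_zero:
  fixes Q :: "real poly" and m :: nat
  defines "n \<equiv> m + degree Q"
  assumes lc: "0 < lead_coeff Q" and deg: "2 * degree Q \<le> n"
    and small: "(\<Sum>i<degree Q. \<bar>coeff Q i\<bar>) * 3 ^ degree Q < real n * lead_coeff Q"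
    and j: "j < n - 1"
  shows "sgn (poly (raising_poly Q (hermite m)) (sorted_zeros (hermite (n - 1)) ! j))
    = (-1) ^ (n - 1 - j)"
proof -
  define x where "x = sorted_zeros (hermite (n - 1)) ! j"
  have "x \<in> real_zeros (hermite (n - 1))"
    using j length_sorted_zeros[OF simple_real_rooted_hermite, of "n - 1"]
    by (metis x_def nth_mem degree_hermite set_sorted_zeros simple_real_rooted_hermite)
  then have zero: "poly (hermite (n - 1)) x = 0"
    by (simp add: real_zeros_def)
  have "0 < (\<Sum>i\<le>degree Q. coeff Q i * hermite_ratio n (degree Q - i) x)"
    using hermite_ratio_combination_pos[OF lc hermite_zero_abs_le[OF zero] deg small] .
  moreover have "sgn (poly (raising 0 (hermite (n - 1))) x) = (-1) ^ (n - 1 - j)"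
    unfolding x_def using j
    by (subst sgn_raising_at_sorted_zero[OF simple_real_rooted_hermite]) simp_all
  moreover have "hermite n = raising 0 (hermite (n - 1))"
    using j hermite_Suc_raising[of "n - 1"] by simp
  ultimately show ?thesis
    using poly_raising_poly_hermite_at_zero[of m Q x] zero
    by (simp add: x_def n_def sgn_mult)
qed

lemma eventually_simple_real_rooted_raising_poly_hermite:
  assumes lc: "0 < lead_coeff Q"
  shows "\<exists>m0. \<forall>m\<ge>m0. simple_real_rooted (raising_poly Q (hermite m))"
proof -
  define k C where "k = degree Q" and "C = (\<Sum>i<k. \<bar>coeff Q i\<bar>)"
  define m0 where "m0 = 2 * k + 1 + nat \<lceil>C * 3 ^ k / lead_coeff Q\<rceil>"
  have "simple_real_rooted (raising_poly Q (hermite m))" if "m0 \<le> m" for m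
  proof -
    define n zs where "n = m + k" and "zs = sorted_zeros (hermite (n - 1))"
    have "C * 3 ^ k / lead_coeff Q \<le> real (nat \<lceil>C * 3 ^ k / lead_coeff Q\<rceil>)"
      by linarith
    also have "\<dots> < real n"
      using that by (simp add: m0_def n_def)
    finally have n: "2 * k \<le> n" "1 \<le> n" "C * 3 ^ k < real n * lead_coeff Q"
      using that lc by (simp_all add: m0_def n_def pos_divide_less_eq)
    have zs: "length zs = n - 1" "sorted_wrt (<) zs"
      using length_sorted_zeros[OF simple_real_rooted_hermite] by (simp_all add: zs_def)
    have Q0: "Q \<noteq> 0"
      using lc by auto
    have "0 < lead_coeff (raising_poly Q (hermite m))"
      using lc lead_coeff_raising_poly[OF Q0 hermite_nonzero] by simp
    moreover have "degree (raising_poly Q (hermite m)) = Suc (length zs)"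
      using n zs degree_raising_poly[OF Q0 hermite_nonzero] by (simp add: n_def k_def)
    moreover have "sgn (poly (raising_poly Q (hermite m)) (zs ! j)) = (-1) ^ (length zs - j)"
      if "j < length zs" for j
      using sgn_raising_poly_hermite_at_sorted_zero[OF lc] n zs that
      by (simp add: zs_def n_def k_def C_def)
    ultimately show ?thesis
      using simple_real_rooted_if_alternating zs(2) by blast
  qed
  then show ?thesis
    by blast
qed

section \<open>The polynomials q_n\<close>

lemma coeff_Ppoly: "coeff (Ppoly K \<gamma>) i = (if i \<le> K then \<gamma> (K - i) else 0)"
proof -
  have "coeff (Ppoly K \<gamma>) i = (\<Sum>j\<le>K. if j = K - i \<and> i \<le> K then \<gamma> j else 0)"
    by (auto simp: Ppoly_def coeff_sum intro!: sum.cong)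
  then show ?thesis
    by (simp add: sum.If_cases)
qed

lemma
  assumes "\<gamma> 0 = 1"
  shows degree_Ppoly: "degree (Ppoly K \<gamma>) = K"
    and lead_coeff_Ppoly: "lead_coeff (Ppoly K \<gamma>) = 1"
proof -
  have "degree (Ppoly K \<gamma>) \<le> K"
    by (rule degree_le) (simp add: coeff_Ppoly)
  moreover have "coeff (Ppoly K \<gamma>) K = 1"
    using assms by (simp add: coeff_Ppoly)
  ultimately show "degree (Ppoly K \<gamma>) = K"
    by (metis le_antisym le_degree zero_neq_one)
  then show "lead_coeff (Ppoly K \<gamma>) = 1"
    using assms by (simp add: coeff_Ppoly)
qed

lemma qpoly_eq_raising_poly:
  assumes "K \<le> n"
  shows "qpoly K \<gamma> n = raising_poly (Ppoly K \<gamma>) (hermite (n - K))"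
proof -
  have "raising_poly (Ppoly K \<gamma>) (hermite (n - K))
      = (\<Sum>i\<le>K. smult (\<gamma> (K - i)) (hermite (n - K + i)))"
    by (simp add: raising_poly_eq_sum[of _ K] degree_le coeff_Ppoly funpow_raising_hermite)
  also have "\<dots> = (\<Sum>j\<le>K. smult (\<gamma> j) (hermite (n - j)))"
    using assms by (intro sum.reindex_bij_witness[of _ "\<lambda>j. K - j" "\<lambda>i. K - i"]) auto
  finally show ?thesis
    by (simp add: qpoly_def)
qed

lemma qpoly_Suc:
  assumes "K \<le> n"
  shows "qpoly K \<gamma> (Suc n) = raising 0 (qpoly K \<gamma> n)"
  using assms by (simp add: qpoly_def raising_sum raising_smult Suc_diff_le hermite_Suc_raising)

lemma lead_coeff_linear_factors_mult:
  "lead_coeff ((\<Prod>r\<leftarrow>rs. [:-r, 1:]) * Q) = lead_coeff (Q :: real poly)"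
  by (induction rs) (simp_all add: lead_coeff_mult mult.assoc del: mult_pCons_left)

lemma real_linear_factorization:
  fixes p :: "real poly"
  assumes "p \<noteq> 0"
  obtains rs Q where "p = (\<Prod>r\<leftarrow>rs. [:-r, 1:]) * Q" "\<And>x. poly Q x \<noteq> 0"
proof -
  have "p \<noteq> 0
      \<longrightarrow> (\<exists>rs Q. p = (\<Prod>r\<leftarrow>rs. [:-r, 1:]) * Q \<and> (\<forall>x. poly Q x \<noteq> 0))"
  proof (induction p rule: poly_root_induct[where P = "\<lambda>_. True"])
    case (no_roots p)
    then show ?case
      by (intro impI exI[of _ "[]"]) auto
  next
    case (root a p)
    show ?case
    proof
      assume "[:a, -1:] * p \<noteq> 0"
      then obtain rs Q where "p = (\<Prod>r\<leftarrow>rs. [:-r, 1:]) * Q" "\<forall>x. poly Q x \<noteq> 0"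
        using root by auto
      then show
        "\<exists>rs Q. [:a, -1:] * p = (\<Prod>r\<leftarrow>rs. [:-r, 1:]) * Q \<and> (\<forall>x. poly Q x \<noteq> 0)"
        by (intro exI[of _ "a # rs"] exI[of _ "-Q"]) (simp add: algebra_simps)
    qed
  qed simp
  then show ?thesis
    using assms that by blast
qed

lemma map_poly_of_real_mult:
  "map_poly complex_of_real (p * q) = map_poly complex_of_real p * map_poly complex_of_real q"
  by (rule poly_eqI) (simp add: coeff_map_poly coeff_mult)

lemma nonreal_zeros_linear_factors_mult:
  "nonreal_zeros ((\<Prod>r\<leftarrow>rs. [:-r, 1:]) * Q) = nonreal_zeros Q"
proof -
  have "poly (map_poly complex_of_real (\<Prod>r\<leftarrow>rs. [:-r, 1:])) z
      = (\<Prod>r\<leftarrow>rs. z - complex_of_real r)" for z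
    by (induction rs) (simp_all add: map_poly_of_real_mult map_poly_pCons del: mult_pCons_left)
  moreover have "(\<Prod>r\<leftarrow>rs. z - complex_of_real r) \<noteq> 0" if "z \<notin> \<real>" for z
    using that by (auto simp: prod_list_zero_iff)
  ultimately show ?thesis
    by (auto simp: nonreal_zeros_def map_poly_of_real_mult)
qed

lemma complex_zeros_eq_nonreal_zeros:
  assumes "\<And>x. poly Q x \<noteq> 0"
  shows "{z. poly (map_poly complex_of_real Q) z = 0} = nonreal_zeros Q"
proof -
  have "poly (map_poly complex_of_real Q) z = 0 \<longleftrightarrow> z \<in> nonreal_zeros Q" for z
    using assms
    by (cases "z \<in> \<real>") (auto elim!: Reals_cases simp: nonreal_zeros_def poly_map_poly_of_real)
  then show ?thesis
    by blast
qed

lemma Ppoly_factorization: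
  assumes \<gamma>: "\<gamma> 0 = 1"
  obtains rs Q where "Ppoly K \<gamma> = (\<Prod>r\<leftarrow>rs. [:-r, 1:]) * Q" "\<And>x. poly Q x \<noteq> 0"
    "lead_coeff Q = 1" "degree Q \<le> K"
proof -
  have deg: "degree (Ppoly K \<gamma>) = K" and lc: "lead_coeff (Ppoly K \<gamma>) = 1"
    using \<gamma> by (rule degree_Ppoly, rule lead_coeff_Ppoly)
  then have "Ppoly K \<gamma> \<noteq> 0"
    by auto
  then obtain rs Q where factor: "Ppoly K \<gamma> = (\<Prod>r\<leftarrow>rs. [:-r, 1:]) * Q"
    and real: "\<And>x. poly Q x \<noteq> 0"
    using real_linear_factorization by blast
  have "(\<Prod>r\<leftarrow>rs. [:-r, 1:]) \<noteq> (0 :: real poly)"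
    using lead_coeff_linear_factors_mult[of rs 1] by auto
  then have "degree Q \<le> K"
    using degree_mult_right_le[of _ Q] deg factor by (metis mult.commute)
  moreover have "lead_coeff Q = 1"
    using lc by (simp add: factor lead_coeff_linear_factors_mult)
  ultimately show ?thesis
    using that factor real by blast
qed

lemma qpoly_interlacing_from_factor:
  assumes K: "0 < K" and \<gamma>: "\<gamma> 0 = 1" and n: "K + m0 \<le> n"
    and factor: "Ppoly K \<gamma> = (\<Prod>r\<leftarrow>rs. [:-r, 1:]) * Q" and lcQ: "lead_coeff Q = 1"
    and rooted: "\<And>m. m0 \<le> m \<Longrightarrow> simple_real_rooted (raising_poly Q (hermite m))"
  shows "real_simple_zeros (qpoly K \<gamma> n)
    \<and> interlaces (real_zeros (qpoly K \<gamma> (Suc n))) (real_zeros (qpoly K \<gamma> n))"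
proof -
  have "Q \<noteq> 0"
    using lcQ by auto
  define h where "h = raising_poly Q (hermite (n - K))"
  have "simple_real_rooted h" "0 < lead_coeff h"
    using rooted[of "n - K"] n lcQ lead_coeff_raising_poly[OF \<open>Q \<noteq> 0\<close> hermite_nonzero]
    by (simp_all add: h_def)
  moreover have "qpoly K \<gamma> n = raising_poly (\<Prod>r\<leftarrow>rs. [:-r, 1:]) h"
    using n by (simp add: qpoly_eq_raising_poly factor raising_poly_mult h_def)
  ultimately have "simple_real_rooted (qpoly K \<gamma> n)" "0 < lead_coeff (qpoly K \<gamma> n)"
    using simple_real_rooted_raising_poly_linear_factors by simp_all
  moreover have "degree (Ppoly K \<gamma>) = K" "lead_coeff (Ppoly K \<gamma>) = 1"
    using \<gamma> by (rule degree_Ppoly, rule lead_coeff_Ppoly)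
  then have "Ppoly K \<gamma> \<noteq> 0" "degree (Ppoly K \<gamma>) = K"
    by auto
  then have "degree (qpoly K \<gamma> n) = n"
    using n degree_raising_poly[OF _ hermite_nonzero] by (simp add: qpoly_eq_raising_poly)
  ultimately show ?thesis
    using interlaces_real_zeros_raising[of "qpoly K \<gamma> n" 0] real_simple_zeros_if_simple_real_rooted
      qpoly_Suc[of K n \<gamma>] n K by simp
qed

lemma qpoly_interlacing_if_real_rooted:
  assumes K: "0 < K" and \<gamma>: "\<gamma> 0 = 1" and real: "nonreal_zeros (Ppoly K \<gamma>) = {}"
    and "K \<le> n"
  shows "real_simple_zeros (qpoly K \<gamma> n)
    \<and> interlaces (real_zeros (qpoly K \<gamma> (Suc n))) (real_zeros (qpoly K \<gamma> n))"
proof -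
  obtain rs Q where factor: "Ppoly K \<gamma> = (\<Prod>r\<leftarrow>rs. [:-r, 1:]) * Q"
    and "\<And>x. poly Q x \<noteq> 0" "lead_coeff Q = 1"
    using Ppoly_factorization[where \<gamma> = \<gamma>, OF \<gamma>] by blast
  then have "poly (map_poly complex_of_real Q) z \<noteq> 0" for z
    using complex_zeros_eq_nonreal_zeros[of Q] real
    by (simp add: factor nonreal_zeros_linear_factors_mult)
  then have "degree Q = 0"
    using fundamental_theorem_of_algebra constant_degree degree_map_poly[of complex_of_real Q]
    by force
  with \<open>lead_coeff Q = 1\<close> have "Q = 1"
    by (metis degree_eq_zeroE lead_coeff_pCons(2) one_pCons)
  then show ?thesis
    using qpoly_interlacing_from_factor[OF K \<gamma> _ factor, of 0] simple_real_rooted_hermite \<open>K \<le> n\<close>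
    by simp
qed

definition monic_polys_with_zeros :: "nat \<Rightarrow> complex set \<Rightarrow> real poly set" where
  "monic_polys_with_zeros K S =
     {Q. lead_coeff Q = 1 \<and> degree Q \<le> K \<and> {z. poly (map_poly complex_of_real Q) z = 0} = S}"

lemma finite_monic_polys_with_zeros:
  assumes "finite S"
  shows "finite (monic_polys_with_zeros K S)"
proof -
  define roots where "roots Q = proots (map_poly complex_of_real Q)" for Q
  have monic: "lead_coeff (map_poly complex_of_real Q) = 1" if "Q \<in> monic_polys_with_zeros K S" for Q
    using that by (simp add: monic_polys_with_zeros_def degree_map_poly coeff_map_poly)
  have "inj_on roots (monic_polys_with_zeros K S)"
  proof (rule inj_onI)
    fix Q1 Q2 assume Q: "Q1 \<in> monic_polys_with_zeros K S" "Q2 \<in> monic_polys_with_zeros K S"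
      and "roots Q1 = roots Q2"
    then have "map_poly complex_of_real Q1 = map_poly complex_of_real Q2"
      using complex_poly_decompose_multiset monic[OF Q(1)] monic[OF Q(2)] by (metis roots_def)
    then show "Q1 = Q2"
      by (metis coeff_map_poly of_real_0 of_real_eq_iff poly_eqI)
  qed
  moreover have "roots ` monic_polys_with_zeros K S \<subseteq> (\<Union>s\<le>K. multisets_of_size S s)"
  proof
    fix M assume "M \<in> roots ` monic_polys_with_zeros K S"
    then obtain Q where Q: "Q \<in> monic_polys_with_zeros K S" and M: "M = roots Q"
      by blast
    then have "map_poly complex_of_real Q \<noteq> 0"
      using monic by fastforce
    then show "M \<in> (\<Union>s\<le>K. multisets_of_size S s)"
      using Q by (auto simp: M roots_def multisets_of_size_def monic_polys_with_zeros_def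
        size_proots_complex degree_map_poly)
  qed
  ultimately show ?thesis
    using assms by (meson finite_UN_I finite_atMost finite_multisets_of_size finite_subset inj_on_finite)
qed

definition hermite_threshold :: "real poly \<Rightarrow> nat" where
  "hermite_threshold Q = (LEAST m0. \<forall>m\<ge>m0. simple_real_rooted (raising_poly Q (hermite m)))"

lemma simple_real_rooted_beyond_hermite_threshold:
  assumes "0 < lead_coeff Q" "hermite_threshold Q \<le> m"
  shows "simple_real_rooted (raising_poly Q (hermite m))"
proof -
  have "\<forall>m\<ge>hermite_threshold Q. simple_real_rooted (raising_poly Q (hermite m))"
    unfolding hermite_threshold_def
    by (rule LeastI_ex[OF eventually_simple_real_rooted_raising_poly_hermite[OF assms(1)]])
  then show ?thesis
    using assms(2) by blast
qed

(* For P with non-real zero set S, the factor Q of P without real zeros lies in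
   monic_polys_with_zeros K S, a finite set, so this threshold works for every such P. *)
definition qpoly_threshold :: "nat \<Rightarrow> complex set \<Rightarrow> nat" where
  "qpoly_threshold K S = Suc (K + Max (insert 0 (hermite_threshold ` monic_polys_with_zeros K S)))"

lemma qpoly_interlacing_beyond_threshold:
  assumes K: "0 < K" and \<gamma>: "\<gamma> 0 = 1"
    and n: "qpoly_threshold K (nonreal_zeros (Ppoly K \<gamma>)) \<le> n"
  shows "real_simple_zeros (qpoly K \<gamma> n)
    \<and> interlaces (real_zeros (qpoly K \<gamma> (Suc n))) (real_zeros (qpoly K \<gamma> n))"
proof -
  define S where "S = nonreal_zeros (Ppoly K \<gamma>)"
  obtain rs Q where factor: "Ppoly K \<gamma> = (\<Prod>r\<leftarrow>rs. [:-r, 1:]) * Q"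
    and real: "\<And>x. poly Q x \<noteq> 0" and lcQ: "lead_coeff Q = 1" and "degree Q \<le> K"
    using Ppoly_factorization[where \<gamma> = \<gamma>, OF \<gamma>] by blast
  moreover have "{z. poly (map_poly complex_of_real Q) z = 0} = S"
    using complex_zeros_eq_nonreal_zeros[OF real]
    by (simp add: S_def factor nonreal_zeros_linear_factors_mult)
  ultimately have "Q \<in> monic_polys_with_zeros K S"
    by (simp add: monic_polys_with_zeros_def)
  moreover have "map_poly complex_of_real (Ppoly K \<gamma>) \<noteq> 0"
    using lead_coeff_Ppoly[where \<gamma> = \<gamma>, OF \<gamma>, of K] by (auto simp: map_poly_eq_0_iff)
  from poly_roots_finite[OF this] have "finite S"
    by (rule rev_finite_subset) (auto simp: S_def nonreal_zeros_def)
  ultimately have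
    "hermite_threshold Q \<le> Max (insert 0 (hermite_threshold ` monic_polys_with_zeros K S))"
    by (intro Max_ge) (simp_all add: finite_monic_polys_with_zeros)
  then have "K + hermite_threshold Q \<le> n"
    using n by (simp add: qpoly_threshold_def S_def)
  moreover have "simple_real_rooted (raising_poly Q (hermite m))" if "hermite_threshold Q \<le> m" for m
    using simple_real_rooted_beyond_hermite_threshold[OF _ that] lcQ by simp
  ultimately show ?thesis
    by (rule qpoly_interlacing_from_factor[OF K \<gamma> _ factor lcQ])
qed

theorem theorem1p2:
  shows "(\<forall>(K::nat) (\<gamma>::nat \<Rightarrow> real). K > 0 \<and> \<gamma> 0 = 1 \<and> \<gamma> K \<noteq> 0 \<and>
            nonreal_zeros (Ppoly K \<gamma>) = {} \<longrightarrow>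
            (\<forall>n\<ge>K. real_simple_zeros (qpoly K \<gamma> n) \<and>
                    interlaces (real_zeros (qpoly K \<gamma> (Suc n))) (real_zeros (qpoly K \<gamma> n))))
       \<and> (\<exists>N :: nat \<Rightarrow> complex set \<Rightarrow> nat.
            \<forall>(K::nat) (\<gamma>::nat \<Rightarrow> real). K > 0 \<and> \<gamma> 0 = 1 \<and> \<gamma> K \<noteq> 0 \<and>
              nonreal_zeros (Ppoly K \<gamma>) \<noteq> {} \<longrightarrow>
              N K (nonreal_zeros (Ppoly K \<gamma>)) > 0 \<and>
              (\<forall>n. n \<ge> N K (nonreal_zeros (Ppoly K \<gamma>)) \<and> n \<ge> K \<longrightarrow>
                 real_simple_zeros (qpoly K \<gamma> n) \<and>
                 interlaces (real_zeros (qpoly K \<gamma> (Suc n))) (real_zeros (qpoly K \<gamma> n))))"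
  using qpoly_interlacing_if_real_rooted qpoly_interlacing_beyond_threshold
  by (intro conjI exI[of _ qpoly_threshold]) (simp_all add: qpoly_threshold_def)

end
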